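(* Let $d,k,m$ be positive integers with $m>\max\{d,k\}$, let $\mathbf W\in\mathbb R^{k\times m}$ and $\mathbf V\in\mathbb R^{m\times d}$ with $\sigma_{\min}(\mathbf W)>0$ and $\sigma_{\min}(\mathbf V)>0$, and let $\boldsymbol\Sigma\in\mathbb R^{d\times d}$ be symmetric positive definite. Define $$\widehat{\mathbf G}_O=\mathbf W\mathbf W^\top\otimes\boldsymbol\Sigma+\mathbf I_k\otimes\boldsymbol\Sigma^{1/2}\mathbf V^\top\mathbf V\boldsymbol\Sigma^{1/2}\in\mathbb R^{kd\times kd}.$$ Then $\widehat{\mathbf G}_O$ is positive definite and, with $\beta_w=\sigma_{\min}^2(\mathbf W)/(\sigma_{\min}^2(\mathbf W)+\sigma_{\min}^2(\mathbf V))$, $$\kappa(\widehat{\mathbf G}_O)\le\kappa(\boldsymbol\Sigma)\cdot\frac{\sigma_{\max}^2(\mathbf W)+\sigma_{\max}^2(\mathbf V)}{\sigma_{\min}^2(\mathbf W)+\sigma_{\min}^2(\mathbf V)}=\kappa(\boldsymbol\Sigma)\big(\beta_w\,\kappa(\mathbf W)^2+(1-\beta_w)\,\kappa(\mathbf V)^2\big).$$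
   Context: $\boldsymbol\Sigma$ plays the role of the empirical input covariance $\frac1n\sum_i \mathbf x_i\mathbf x_i^\top$, and $\widehat{\mathbf G}_O$ is a matrix having the same nonzero eigenvalues as the Gauss–Newton matrix of the network $F(\mathbf x)=\mathbf W\mathbf V\mathbf x$. $\boldsymbol\Sigma^{1/2}$ is the unique positive semidefinite square root; $\otimes$ is the Kronecker product. For a symmetric positive definite matrix $\mathbf A$, $\kappa(\mathbf A)=\lambda_{\max}(\mathbf A)/\lambda_{\min}(\mathbf A)$. For a rectangular matrix $\mathbf A\in\mathbb R^{p\times q}$, $\sigma_{\max}(\mathbf A)$ is its largest singular value, $\sigma_{\min}(\mathbf A)$ is its $\min(p,q)$-th largest singular value, and $\kappa(\mathbf A)=\sigma_{\max}(\mathbf A)/\sigma_{\min}(\mathbf A)$. *)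

theory Defs
  imports "HOL-Analysis.Analysis"
begin

text \<open>Matrices are HOL-Analysis matrices: a p x q real matrix is of type real^'q^'p
  (rows indexed by 'p, columns by 'q); the dimensions are CARD('p), CARD('q).\<close>

definition symmetric_mat :: "real^'n^'n \<Rightarrow> bool" where
  "symmetric_mat A \<longleftrightarrow> transpose A = A"

definition pos_def_mat :: "real^'n^'n \<Rightarrow> bool" where
  "pos_def_mat A \<longleftrightarrow> symmetric_mat A \<and> (\<forall>x. x \<noteq> 0 \<longrightarrow> x \<bullet> (A *v x) > 0)"

definition pos_semidef_mat :: "real^'n^'n \<Rightarrow> bool" where
  "pos_semidef_mat A \<longleftrightarrow> symmetric_mat A \<and> (\<forall>x. x \<bullet> (A *v x) \<ge> 0)"

definition mat_sqrt :: "real^'n^'n \<Rightarrow> real^'n^'n" where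
  "mat_sqrt A = (THE R. pos_semidef_mat R \<and> R ** R = A)"

text \<open>Kronecker product, with index set 'a x 'b (row (i,j), column (i',j')).\<close>
definition kron :: "real^'a^'a \<Rightarrow> real^'b^'b \<Rightarrow> real^('a \<times> 'b)^('a \<times> 'b)" where
  "kron A B = (\<chi> p. \<chi> q. A $ fst p $ fst q * B $ snd p $ snd q)"

definition eigvals :: "real^'n^'n \<Rightarrow> real set" where
  "eigvals A = {l. \<exists>v. v \<noteq> 0 \<and> A *v v = l *\<^sub>R v}"

definition lambda_max :: "real^'n^'n \<Rightarrow> real" where
  "lambda_max A = Max (eigvals A)"

definition lambda_min :: "real^'n^'n \<Rightarrow> real" where
  "lambda_min A = Min (eigvals A)"

definition kappa_sym :: "real^'n^'n \<Rightarrow> real" where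
  "kappa_sym A = lambda_max A / lambda_min A"

text \<open>Singular values of a p x q matrix: sigma_max is the largest singular value,
  sigma_min the min(p,q)-th largest, i.e. the square root of the smallest eigenvalue
  of the smaller Gram matrix.\<close>
definition sigma_max :: "real^'q^'p \<Rightarrow> real" where
  "sigma_max A = sqrt (lambda_max (transpose A ** A))"

definition sigma_min :: "real^'q^'p \<Rightarrow> real" where
  "sigma_min A = (if CARD('p) \<le> CARD('q) then sqrt (lambda_min (A ** transpose A))
                  else sqrt (lambda_min (transpose A ** A)))"

definition kappa_rect :: "real^'q^'p \<Rightarrow> real" where
  "kappa_rect A = sigma_max A / sigma_min A"

end

theory Submission
  imports Defs
begin

text \<open>
  The Rayleigh quotient of G lies between \<lambda>_min(\<Sigma>) (\<sigma>_min(W)^2 + \<sigma>_min(V)^2) and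
  \<lambda>_max(\<Sigma>) (\<sigma>_max(W)^2 + \<sigma>_max(V)^2).  Indeed, the first Kronecker term is congruent to
  W W^T \<otimes> I via I \<otimes> \<Sigma>^(1/2), the second is I \<otimes> \<Sigma>^(1/2) V^T V \<Sigma>^(1/2), and congruence by
  \<Sigma>^(1/2) scales Rayleigh quotients by a factor between \<lambda>_min(\<Sigma>) and \<lambda>_max(\<Sigma>).  Since
  m > max(d, k), the squares of the extreme singular values of W and V bound the Rayleigh quotients
  of W W^T and V^T V.  The extreme eigenvalues of a symmetric matrix are its extreme Rayleigh
  quotients, so G is positive definite and \<kappa>(G) is at most the ratio of the two bounds.
\<close>

definition rayleigh_bounds :: "real^'n^'n \<Rightarrow> real \<Rightarrow> real \<Rightarrow> bool" where
  "rayleigh_bounds A lo hi \<longleftrightarrow>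
     (\<forall>x. lo * (x \<bullet> x) \<le> x \<bullet> (A *v x) \<and> x \<bullet> (A *v x) \<le> hi * (x \<bullet> x))"

lemma rayleigh_boundsI:
  assumes "\<And>x. lo * (x \<bullet> x) \<le> x \<bullet> (A *v x)" and "\<And>x. x \<bullet> (A *v x) \<le> hi * (x \<bullet> x)"
  shows "rayleigh_bounds A lo hi"
  using assms unfolding rayleigh_bounds_def by blast

lemma rayleigh_boundsD:
  assumes "rayleigh_bounds A lo hi"
  shows rayleigh_bounds_lower: "lo * (x \<bullet> x) \<le> x \<bullet> (A *v x)"
    and rayleigh_bounds_upper: "x \<bullet> (A *v x) \<le> hi * (x \<bullet> x)"
  using assms unfolding rayleigh_bounds_def by blast+

lemma rayleigh_bounds_mono:
  fixes A :: "real^'n^'n"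
  assumes "rayleigh_bounds A lo hi" "lo' \<le> lo" "hi \<le> hi'"
  shows "rayleigh_bounds A lo' hi'"
proof (rule rayleigh_boundsI)
  fix x :: "real^'n"
  have "lo' * (x \<bullet> x) \<le> lo * (x \<bullet> x)" "hi * (x \<bullet> x) \<le> hi' * (x \<bullet> x)"
    using assms(2,3) by (simp_all add: mult_right_mono)
  then show "lo' * (x \<bullet> x) \<le> x \<bullet> (A *v x)" "x \<bullet> (A *v x) \<le> hi' * (x \<bullet> x)"
    using rayleigh_boundsD[OF assms(1), of x] by linarith+
qed

lemma rayleigh_bounds_add:
  assumes "rayleigh_bounds A a b" "rayleigh_bounds B c d"
  shows "rayleigh_bounds (A + B) (a + c) (b + d)"
  using rayleigh_boundsD[OF assms(1)] rayleigh_boundsD[OF assms(2)]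
  by (intro rayleigh_boundsI) (simp_all add: matrix_vector_mult_add_rdistrib inner_add_right
      distrib_right add_mono)

lemma rayleigh_bounds_lower_le_upper:
  assumes "rayleigh_bounds (A :: real^'n^'n) lo hi"
  shows "lo \<le> hi"
proof -
  define x :: "real^'n" where "x = (\<chi> i. 1)"
  have "0 < x \<bullet> x" by (simp add: x_def vec_eq_iff)
  moreover have "lo * (x \<bullet> x) \<le> hi * (x \<bullet> x)"
    using rayleigh_boundsD[OF assms, of x] by linarith
  ultimately show ?thesis by simp
qed

lemma eigval_in_rayleigh_bounds:
  assumes "rayleigh_bounds A lo hi" "l \<in> eigvals A"
  shows "lo \<le> l \<and> l \<le> hi"
proof -
  obtain v where "v \<noteq> 0" "A *v v = l *\<^sub>R v" using assms(2) unfolding eigvals_def by blast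
  then have "v \<bullet> (A *v v) = l * (v \<bullet> v)" "0 < v \<bullet> v" by simp_all
  then show ?thesis using rayleigh_boundsD[OF assms(1), of v] by simp
qed

section \<open>Spectral theory of real symmetric matrices\<close>

lemma symmetric_mat_inner:
  assumes "symmetric_mat A"
  shows "x \<bullet> (A *v y) = (A *v x) \<bullet> y"
proof -
  have "x \<bullet> (A *v y) = (x v* A) \<bullet> y" by (simp add: dot_lmul_matrix)
  also have "x v* A = transpose A *v x" by simp
  finally show ?thesis using assms unfolding symmetric_mat_def by simp
qed

lemma symmetric_mat_add: "symmetric_mat A \<Longrightarrow> symmetric_mat B \<Longrightarrow> symmetric_mat (A + B)"
  unfolding symmetric_mat_def by (simp add: transpose_def vec_eq_iff)

lemma symmetric_mat_uminus: "symmetric_mat A \<Longrightarrow> symmetric_mat (- A)"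
  unfolding symmetric_mat_def by (simp add: transpose_def vec_eq_iff)

lemma matrix_vector_mult_uminus: "(- A) *v x = - ((A :: real^'n^'m) *v x)"
  by (simp add: matrix_vector_mult_def vec_eq_iff sum_negf)

lemma quadratic_nonneg_linear_coeff_zero:
  fixes b q :: real
  assumes "\<And>t. 0 \<le> 2 * t * b + t\<^sup>2 * q"
  shows "b = 0"
proof -
  define d where "d = \<bar>q\<bar> + 1"
  have d: "0 < d" "q \<le> d" unfolding d_def by linarith+
  define s where "s = b / d"
  have "0 \<le> 2 * (- s) * b + (- s)\<^sup>2 * q" by (rule assms)
  also have "\<dots> = s\<^sup>2 * q - 2 * (s * b)" by algebra
  finally have "0 \<le> s\<^sup>2 * q - 2 * (s * b)" .
  moreover have "s\<^sup>2 * q \<le> s\<^sup>2 * d" using d(2) by (rule mult_left_mono) simp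
  moreover have "s\<^sup>2 * d = s * b" using d(1) by (simp add: s_def power2_eq_square)
  ultimately have "0 \<le> - (s * b)" by linarith
  also have "s * b = b\<^sup>2 / d" by (simp add: s_def power2_eq_square)
  finally have "b\<^sup>2 \<le> 0" using d(1) by (simp add: divide_le_0_iff)
  then show ?thesis by simp
qed

lemma rayleigh_maximizer_eigenvector:
  fixes A :: "real^'n^'n"
  assumes sym: "symmetric_mat A" and S: "subspace S" and inv: "\<And>y. y \<in> S \<Longrightarrow> A *v y \<in> S"
    and bound: "\<And>y. y \<in> S \<Longrightarrow> y \<bullet> (A *v y) \<le> \<mu> * (y \<bullet> y)"
    and x: "x \<in> S" "x \<bullet> (A *v x) = \<mu> * (x \<bullet> x)"
  shows "A *v x = \<mu> *\<^sub>R x"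
proof -
  define r where "r = \<mu> *\<^sub>R x - A *v x"
  \<comment> \<open>first-order condition: moving x along any y \<in> S does not increase the quotient\<close>
  have r_orth: "y \<bullet> r = 0" if y: "y \<in> S" for y
  proof (rule quadratic_nonneg_linear_coeff_zero)
    fix t :: real
    have "x + t *\<^sub>R y \<in> S" using S x(1) y by (simp add: subspace_add subspace_scale)
    then have "0 \<le> \<mu> * ((x + t *\<^sub>R y) \<bullet> (x + t *\<^sub>R y)) - (x + t *\<^sub>R y) \<bullet> (A *v (x + t *\<^sub>R y))"
      using bound by fastforce
    also have "\<dots> = 2 * t * (y \<bullet> r) + t\<^sup>2 * (\<mu> * (y \<bullet> y) - y \<bullet> (A *v y))"
      using x(2) symmetric_mat_inner[OF sym, of x y]
      by (simp add: r_def inner_diff_right inner_commute power2_eq_square algebra_simps)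
    finally show "0 \<le> 2 * t * (y \<bullet> r) + t\<^sup>2 * (\<mu> * (y \<bullet> y) - y \<bullet> (A *v y))" .
  qed
  have "r \<in> S" using S x(1) inv by (simp add: r_def subspace_diff subspace_scale)
  then have "r \<bullet> r = 0" by (rule r_orth)
  then show ?thesis by (simp add: r_def)
qed

lemma symmetric_mat_eigenvector_in_subspace:
  fixes A :: "real^'n^'n"
  assumes sym: "symmetric_mat A" and S: "subspace S" and inv: "\<And>y. y \<in> S \<Longrightarrow> A *v y \<in> S"
    and nontrivial: "x1 \<in> S" "x1 \<noteq> 0"
  obtains v \<mu> where "v \<in> S" "norm v = 1" "A *v v = \<mu> *\<^sub>R v"
    "\<And>y. y \<in> S \<Longrightarrow> y \<bullet> (A *v y) \<le> \<mu> * (y \<bullet> y)"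
proof -
  define K where "K = S \<inter> sphere 0 1"
  have "compact K" unfolding K_def using S by (simp add: closed_Int_compact closed_subspace)
  moreover have "x1 /\<^sub>R norm x1 \<in> K" using nontrivial S unfolding K_def by (simp add: subspace_scale)
  then have "K \<noteq> {}" by auto
  moreover have "continuous_on K (\<lambda>x. x \<bullet> (A *v x))"
    by (intro continuous_intros linear_continuous_on matrix_vector_mul_bounded_linear)
  ultimately have "\<exists>v\<in>K. \<forall>y\<in>K. y \<bullet> (A *v y) \<le> v \<bullet> (A *v v)"
    by (rule continuous_attains_sup)
  then obtain v where v: "v \<in> K" and v_max: "\<And>y. y \<in> K \<Longrightarrow> y \<bullet> (A *v y) \<le> v \<bullet> (A *v v)"
    by blast
  define \<mu> where "\<mu> = v \<bullet> (A *v v)"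
  have vS: "v \<in> S" and v_norm: "norm v = 1" using v K_def by auto
  have bound: "y \<bullet> (A *v y) \<le> \<mu> * (y \<bullet> y)" if y: "y \<in> S" for y
  proof (cases "y = 0")
    case False
    define u where "u = y /\<^sub>R norm y"
    have "u \<in> K" using y False S unfolding K_def u_def by (simp add: subspace_scale)
    then have "u \<bullet> (A *v u) \<le> \<mu>" using v_max unfolding \<mu>_def by blast
    moreover have "u \<bullet> (A *v u) = (y \<bullet> (A *v y)) / (norm y)\<^sup>2"
      unfolding u_def by (simp add: matrix_vector_mult_scaleR power2_eq_square divide_inverse)
    moreover have "y \<bullet> y = (norm y)\<^sup>2" by (simp add: dot_square_norm)
    ultimately show ?thesis using False by (simp add: divide_le_eq mult.commute)
  qed simp
  have "v \<bullet> (A *v v) = \<mu> * (v \<bullet> v)" using v_norm by (simp add: \<mu>_def dot_square_norm)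
  with sym S inv bound vS have "A *v v = \<mu> *\<^sub>R v" by (rule rayleigh_maximizer_eigenvector)
  from vS v_norm this bound show ?thesis by (rule that)
qed

lemma symmetric_mat_top_eigval:
  fixes A :: "real^'n^'n"
  assumes "symmetric_mat A"
  shows "\<exists>\<mu>\<in>eigvals A. \<forall>x. x \<bullet> (A *v x) \<le> \<mu> * (x \<bullet> x)"
proof -
  have nonzero: "(\<chi> i. 1) \<noteq> (0 :: real^'n)" by (simp add: vec_eq_iff)
  obtain v \<mu> where "v \<in> UNIV" "norm v = 1" "A *v v = \<mu> *\<^sub>R v"
    "\<And>x. x \<in> UNIV \<Longrightarrow> x \<bullet> (A *v x) \<le> \<mu> * (x \<bullet> x)"
    using symmetric_mat_eigenvector_in_subspace[OF assms subspace_UNIV UNIV_I UNIV_I nonzero] by blast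
  moreover from \<open>norm v = 1\<close> have "v \<noteq> 0" by auto
  ultimately show ?thesis unfolding eigvals_def by blast
qed

lemma symmetric_mat_bottom_eigval:
  fixes A :: "real^'n^'n"
  assumes "symmetric_mat A"
  shows "\<exists>\<nu>\<in>eigvals A. \<forall>x. \<nu> * (x \<bullet> x) \<le> x \<bullet> (A *v x)"
proof -
  obtain \<mu> where \<mu>: "\<mu> \<in> eigvals (- A)" and upper: "\<forall>x. x \<bullet> ((- A) *v x) \<le> \<mu> * (x \<bullet> x)"
    using symmetric_mat_top_eigval[OF symmetric_mat_uminus[OF assms]] by blast
  have "- \<mu> \<in> eigvals A"
  proof -
    obtain v where "v \<noteq> 0" "(- A) *v v = \<mu> *\<^sub>R v" using \<mu> unfolding eigvals_def by blast
    then have "A *v v = (- \<mu>) *\<^sub>R v" unfolding matrix_vector_mult_uminus by (metis minus_minus scaleR_minus_left)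
    with \<open>v \<noteq> 0\<close> show ?thesis unfolding eigvals_def by blast
  qed
  moreover have "- \<mu> * (x \<bullet> x) \<le> x \<bullet> (A *v x)" for x
    using upper[rule_format, of x] unfolding matrix_vector_mult_uminus by simp
  ultimately show ?thesis by blast
qed

lemma eigenvectors_orthogonal:
  assumes "symmetric_mat A" "A *v v = l *\<^sub>R v" "A *v w = l' *\<^sub>R w" "l \<noteq> l'"
  shows "orthogonal v w"
proof -
  have "l * (v \<bullet> w) = (A *v v) \<bullet> w" using assms(2) by simp
  also have "\<dots> = v \<bullet> (A *v w)" by (rule symmetric_mat_inner[OF assms(1), symmetric])
  also have "\<dots> = l' * (v \<bullet> w)" using assms(3) by simp
  finally show ?thesis using assms(4) by (auto simp: orthogonal_def)
qed

lemma finite_eigvals: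
  fixes A :: "real^'n^'n"
  assumes sym: "symmetric_mat A"
  shows "finite (eigvals A)"
proof -
  define eigvec where "eigvec l = (SOME v. v \<noteq> 0 \<and> A *v v = l *\<^sub>R v)" for l
  have eigvec: "eigvec l \<noteq> 0" "A *v eigvec l = l *\<^sub>R eigvec l" if "l \<in> eigvals A" for l
  proof -
    have "\<exists>v. v \<noteq> 0 \<and> A *v v = l *\<^sub>R v" using that unfolding eigvals_def by blast
    then have "eigvec l \<noteq> 0 \<and> A *v eigvec l = l *\<^sub>R eigvec l" unfolding eigvec_def by (rule someI_ex)
    then show "eigvec l \<noteq> 0" "A *v eigvec l = l *\<^sub>R eigvec l" by simp_all
  qed
  have "inj_on eigvec (eigvals A)"
  proof (rule inj_onI)
    fix l l' assume l: "l \<in> eigvals A" and l': "l' \<in> eigvals A" and eq: "eigvec l = eigvec l'"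
    have "l *\<^sub>R eigvec l = A *v eigvec l" using eigvec(2)[OF l] by simp
    also have "\<dots> = l' *\<^sub>R eigvec l" using eigvec(2)[OF l'] eq by simp
    finally show "l = l'" using eigvec(1)[OF l] by simp
  qed
  moreover have "pairwise orthogonal (eigvec ` eigvals A)"
  proof (unfold pairwise_def, intro ballI impI)
    fix x y assume "x \<in> eigvec ` eigvals A" "y \<in> eigvec ` eigvals A" "x \<noteq> y"
    then obtain l l' where l: "l \<in> eigvals A" and l': "l' \<in> eigvals A"
      and xy: "x = eigvec l" "y = eigvec l'" and "l \<noteq> l'"
      by blast
    show "orthogonal x y"
      unfolding xy using sym eigvec(2)[OF l] eigvec(2)[OF l'] \<open>l \<noteq> l'\<close> by (rule eigenvectors_orthogonal)
  qed
  then have "finite (eigvec ` eigvals A)" by (rule pairwise_orthogonal_imp_finite)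
  ultimately show ?thesis using finite_imageD by blast
qed

lemma symmetric_mat_extreme_eigvals:
  fixes A :: "real^'n^'n"
  assumes sym: "symmetric_mat A"
  shows lambda_min_in_eigvals: "lambda_min A \<in> eigvals A"
    and lambda_max_in_eigvals: "lambda_max A \<in> eigvals A"
    and rayleigh_bounds_lambda: "rayleigh_bounds A (lambda_min A) (lambda_max A)"
proof -
  obtain \<nu> where \<nu>: "\<nu> \<in> eigvals A" and lower: "\<And>x. \<nu> * (x \<bullet> x) \<le> x \<bullet> (A *v x)"
    using symmetric_mat_bottom_eigval[OF sym] by blast
  obtain \<mu> where \<mu>: "\<mu> \<in> eigvals A" and upper: "\<And>x. x \<bullet> (A *v x) \<le> \<mu> * (x \<bullet> x)"
    using symmetric_mat_top_eigval[OF sym] by blast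
  from lower upper have bounds: "rayleigh_bounds A \<nu> \<mu>" by (rule rayleigh_boundsI)
  have "lambda_min A = \<nu>" unfolding lambda_min_def
    using finite_eigvals[OF sym] \<nu> eigval_in_rayleigh_bounds[OF bounds] by (intro Min_eqI) auto
  moreover have "lambda_max A = \<mu>" unfolding lambda_max_def
    using finite_eigvals[OF sym] \<mu> eigval_in_rayleigh_bounds[OF bounds] by (intro Max_eqI) auto
  ultimately show "lambda_min A \<in> eigvals A" "lambda_max A \<in> eigvals A"
    "rayleigh_bounds A (lambda_min A) (lambda_max A)"
    using \<nu> \<mu> bounds by simp_all
qed

lemma lambda_bounds_of_rayleigh:
  assumes "symmetric_mat A" "rayleigh_bounds A lo hi"
  shows "lo \<le> lambda_min A \<and> lambda_max A \<le> hi"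
  using eigval_in_rayleigh_bounds[OF assms(2) lambda_min_in_eigvals[OF assms(1)]]
    eigval_in_rayleigh_bounds[OF assms(2) lambda_max_in_eigvals[OF assms(1)]]
  by simp

lemma pos_def_mat_of_rayleigh:
  fixes A :: "real^'n^'n"
  assumes "symmetric_mat A" "rayleigh_bounds A lo hi" "0 < lo"
  shows "pos_def_mat A"
  unfolding pos_def_mat_def
proof (intro conjI allI impI assms(1))
  fix x :: "real^'n" assume "x \<noteq> 0"
  then have "0 < lo * (x \<bullet> x)" using assms(3) by simp
  then show "0 < x \<bullet> (A *v x)" using rayleigh_bounds_lower[OF assms(2)] by (rule less_le_trans)
qed

lemma kappa_sym_le_of_rayleigh:
  assumes "symmetric_mat A" "rayleigh_bounds A lo hi" "0 < lo"
  shows "kappa_sym A \<le> hi / lo"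
proof -
  have lambda: "lo \<le> lambda_min A" "lambda_max A \<le> hi"
    using lambda_bounds_of_rayleigh[OF assms(1,2)] by auto
  have "0 \<le> hi" using rayleigh_bounds_lower_le_upper[OF assms(2)] assms(3) by linarith
  from frac_le[OF this lambda(2) assms(3) lambda(1)] show ?thesis unfolding kappa_sym_def .
qed

lemma symmetric_mat_orthogonal_eigenvector:
  assumes "symmetric_mat A" "A *v b = l *\<^sub>R b" "orthogonal b y"
  shows "orthogonal b (A *v y)"
proof -
  have "b \<bullet> (A *v y) = l * (b \<bullet> y)" using symmetric_mat_inner[OF assms(1), of b y] assms(2) by simp
  then show ?thesis using assms(3) unfolding orthogonal_def by simp
qed

lemma symmetric_mat_eigenvector_orthogonal_to:
  fixes A :: "real^'n^'n"
  assumes sym: "symmetric_mat A" and "span B \<noteq> UNIV"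
    and eig: "\<And>b. b \<in> B \<Longrightarrow> \<exists>l. A *v b = l *\<^sub>R b"
  obtains v \<mu> where "norm v = 1" "A *v v = \<mu> *\<^sub>R v" "\<And>b. b \<in> B \<Longrightarrow> orthogonal b v"
proof -
  have "span B \<subset> span UNIV" using \<open>span B \<noteq> UNIV\<close> by auto
  then obtain r where "r \<noteq> 0" and r_orth: "\<And>y. y \<in> span B \<Longrightarrow> orthogonal r y"
    by (rule orthogonal_to_subspace_exists_gen) blast
  define S where "S = {y. \<forall>b\<in>B. orthogonal b y}"
  have S_subspace: "subspace S" unfolding S_def by (rule subspace_orthogonal_to_vectors)
  have S_invariant: "A *v y \<in> S" if "y \<in> S" for y
  proof -
    have "orthogonal b (A *v y)" if "b \<in> B" for b
    proof -
      obtain l where "A *v b = l *\<^sub>R b" using eig[OF \<open>b \<in> B\<close>] by blast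
      moreover have "orthogonal b y" using \<open>y \<in> S\<close> \<open>b \<in> B\<close> unfolding S_def by blast
      ultimately show ?thesis by (rule symmetric_mat_orthogonal_eigenvector[OF sym])
    qed
    then show ?thesis unfolding S_def by blast
  qed
  have "r \<in> S" using r_orth[OF span_base] unfolding S_def by (simp add: orthogonal_commute)
  obtain v \<mu> where v: "v \<in> S" "norm v = 1" "A *v v = \<mu> *\<^sub>R v"
    using symmetric_mat_eigenvector_in_subspace[OF sym S_subspace S_invariant \<open>r \<in> S\<close> \<open>r \<noteq> 0\<close>]
    by blast
  have "orthogonal b v" if "b \<in> B" for b using v(1) that unfolding S_def by blast
  with v(2,3) show ?thesis by (rule that)
qed

lemma symmetric_mat_eigenbasis:
  fixes A :: "real^'n^'n"
  assumes sym: "symmetric_mat A"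
  obtains B where "finite B" "pairwise orthogonal B" "\<And>b. b \<in> B \<Longrightarrow> norm b = 1"
    "\<And>b. b \<in> B \<Longrightarrow> \<exists>l. A *v b = l *\<^sub>R b" "span B = UNIV"
proof -
  define eigen_family where "eigen_family B \<longleftrightarrow> pairwise orthogonal B \<and> (\<forall>b\<in>B. norm b = 1)
    \<and> (\<forall>b\<in>B. \<exists>l. A *v b = l *\<^sub>R b)" for B
  have bounded: "finite B \<and> card B \<le> DIM(real^'n)" if "eigen_family B" for B
  proof -
    have "pairwise orthogonal B" "0 \<notin> B" using that unfolding eigen_family_def by fastforce+
    then have "independent B" by (rule pairwise_orthogonal_independent)
    then show ?thesis by (rule independent_bound)
  qed
  have "\<exists>B. eigen_family B \<and> (\<forall>C. eigen_family C \<longrightarrow> card C \<le> card B)"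
  proof (rule ex_has_greatest_nat)
    show "eigen_family {}" unfolding eigen_family_def by simp
    show "\<forall>C. eigen_family C \<longrightarrow> card C < Suc DIM(real^'n)"
      using bounded by (simp add: less_Suc_eq_le)
  qed
  then obtain B where B: "eigen_family B" and B_max: "\<And>C. eigen_family C \<Longrightarrow> card C \<le> card B"
    by blast
  then have B_orth: "pairwise orthogonal B" and B_unit: "\<And>b. b \<in> B \<Longrightarrow> norm b = 1"
    and B_eig: "\<And>b. b \<in> B \<Longrightarrow> \<exists>l. A *v b = l *\<^sub>R b"
    unfolding eigen_family_def by blast+
  have "span B = UNIV"
  proof (rule ccontr)
    assume "span B \<noteq> UNIV"
    then obtain v \<mu> where v: "norm v = 1" "A *v v = \<mu> *\<^sub>R v" and v_orth: "\<And>b. b \<in> B \<Longrightarrow> orthogonal b v"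
      using symmetric_mat_eigenvector_orthogonal_to[OF sym _ B_eig] by blast
    have "v \<notin> B" using v_orth[of v] \<open>norm v = 1\<close> by (auto simp: orthogonal_def)
    have "pairwise orthogonal (insert v B)"
      using B_orth v_orth by (simp add: pairwise_insert orthogonal_commute)
    then have "eigen_family (insert v B)"
      unfolding eigen_family_def using B_unit B_eig v by blast
    then have "card (insert v B) \<le> card B" by (rule B_max)
    then show False using \<open>v \<notin> B\<close> bounded[OF B] by simp
  qed
  moreover have "finite B" using bounded[OF B] by blast
  ultimately show ?thesis using that B_orth B_unit B_eig by blast
qed

section \<open>Positive semidefinite matrices and square roots\<close>

lemma pos_semidef_mat_symmetric: "pos_semidef_mat A \<Longrightarrow> symmetric_mat A"
  unfolding pos_semidef_mat_def by blast

lemma pos_def_mat_pos_semidef: "pos_def_mat A \<Longrightarrow> pos_semidef_mat A"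
  unfolding pos_def_mat_def pos_semidef_mat_def by (metis inner_zero_left matrix_vector_mult_0_right
      order.refl order_less_imp_le)

lemma lambda_min_pos:
  assumes "pos_def_mat A"
  shows "0 < lambda_min A"
proof -
  have sym: "symmetric_mat A" using assms unfolding pos_def_mat_def by blast
  obtain v where "v \<noteq> 0" and v: "A *v v = lambda_min A *\<^sub>R v"
    using lambda_min_in_eigvals[OF sym] unfolding eigvals_def by blast
  then have "0 < lambda_min A * (v \<bullet> v)" using assms unfolding pos_def_mat_def by force
  moreover have "0 < v \<bullet> v" using \<open>v \<noteq> 0\<close> by simp
  ultimately show ?thesis by (simp add: zero_less_mult_iff)
qed

lemma pos_semidef_mat_lambda_nonneg:
  assumes "pos_semidef_mat A"
  shows "0 \<le> lambda_min A" and "0 \<le> lambda_max A"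
proof -
  have sym: "symmetric_mat A" by (rule pos_semidef_mat_symmetric[OF assms])
  obtain v where "v \<noteq> 0" "A *v v = lambda_min A *\<^sub>R v"
    using lambda_min_in_eigvals[OF sym] unfolding eigvals_def by blast
  then have "0 \<le> lambda_min A * (v \<bullet> v)"
    using assms unfolding pos_semidef_mat_def by (metis inner_scaleR_right)
  moreover have "0 < v \<bullet> v" using \<open>v \<noteq> 0\<close> by simp
  ultimately show "0 \<le> lambda_min A" by (simp add: zero_le_mult_iff)
  then show "0 \<le> lambda_max A"
    using rayleigh_bounds_lower_le_upper[OF rayleigh_bounds_lambda[OF sym]] by linarith
qed

lemma pos_semidef_mat_eigenbasis:
  fixes A :: "real^'n^'n"
  assumes psd: "pos_semidef_mat A"
  obtains B ev where "finite B" "pairwise orthogonal B" "\<And>b. b \<in> B \<Longrightarrow> norm b = 1"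
    "\<And>b. b \<in> B \<Longrightarrow> A *v b = ev b *\<^sub>R b" "\<And>b. b \<in> B \<Longrightarrow> 0 \<le> ev b" "span B = UNIV"
proof -
  obtain B where B: "finite B" "pairwise orthogonal B" "\<And>b. b \<in> B \<Longrightarrow> norm b = 1"
    "\<And>b. b \<in> B \<Longrightarrow> \<exists>l. A *v b = l *\<^sub>R b" "span B = UNIV"
    using symmetric_mat_eigenbasis[OF pos_semidef_mat_symmetric[OF psd]] by blast
  define ev where "ev b = (SOME l. A *v b = l *\<^sub>R b)" for b
  have ev: "A *v b = ev b *\<^sub>R b" if "b \<in> B" for b
    unfolding ev_def using B(4)[OF that] by (rule someI_ex)
  have "0 \<le> ev b" if "b \<in> B" for b
  proof -
    have "ev b = b \<bullet> (A *v b)" using ev[OF that] B(3)[OF that] by (simp add: dot_square_norm)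
    then show ?thesis using psd unfolding pos_semidef_mat_def by simp
  qed
  with B ev show ?thesis by (intro that) auto
qed

lemma matrix_eq_on_spanning_set:
  fixes A C :: "real^'n^'m"
  assumes "span B = UNIV" "\<And>b. b \<in> B \<Longrightarrow> A *v b = C *v b"
  shows "A = C"
proof -
  have "A *v x = C *v x" for x
    using linear_eq_on_span[OF matrix_vector_mul_linear matrix_vector_mul_linear] assms by blast
  then show ?thesis by (simp add: matrix_eq)
qed

lemma pos_semidef_sqrt_on_eigenvector:
  fixes R :: "real^'n^'n"
  assumes psd: "pos_semidef_mat R" and eig: "R *v (R *v v) = l *\<^sub>R v" and "0 \<le> l"
  shows "R *v v = sqrt l *\<^sub>R v"
proof -
  define u where "u = R *v v - sqrt l *\<^sub>R v"
  have Ru: "R *v u = - sqrt l *\<^sub>R u"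
    using eig \<open>0 \<le> l\<close> by (simp add: u_def algebra_simps)
  show ?thesis
  proof (cases "l = 0")
    case True
    have "(R *v v) \<bullet> (R *v v) = v \<bullet> (R *v (R *v v))"
      by (rule symmetric_mat_inner[OF pos_semidef_mat_symmetric[OF psd], symmetric])
    then show ?thesis using eig True by simp
  next
    case False
    have "0 \<le> u \<bullet> (R *v u)" using psd unfolding pos_semidef_mat_def by blast
    then have "u \<bullet> u \<le> 0" using Ru False \<open>0 \<le> l\<close> by (simp add: mult_le_0_iff)
    then have "u = 0" using inner_gt_zero_iff[of u] by linarith
    then show ?thesis by (simp add: u_def)
  qed
qed

lemma pos_semidef_sqrt_unique:
  fixes A R1 R2 :: "real^'n^'n"
  assumes "pos_semidef_mat A"
    and R1: "pos_semidef_mat R1" "R1 ** R1 = A" and R2: "pos_semidef_mat R2" "R2 ** R2 = A"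
  shows "R1 = R2"
proof -
  obtain B ev where B: "span B = UNIV" and ev: "\<And>b. b \<in> B \<Longrightarrow> A *v b = ev b *\<^sub>R b"
    and ev_nonneg: "\<And>b. b \<in> B \<Longrightarrow> 0 \<le> ev b"
    using pos_semidef_mat_eigenbasis[OF assms(1)] by metis
  have "R *v b = sqrt (ev b) *\<^sub>R b" if "pos_semidef_mat R" "R ** R = A" "b \<in> B" for R b
    using pos_semidef_sqrt_on_eigenvector[OF that(1) _ ev_nonneg[OF that(3)]] ev[OF that(3)] that(2)
    by (simp add: matrix_vector_mul_assoc)
  with B R1 R2 show ?thesis by (intro matrix_eq_on_spanning_set) auto
qed

lemma pos_semidef_sqrt_exists:
  fixes A :: "real^'n^'n"
  assumes "pos_semidef_mat A"
  shows "\<exists>R. pos_semidef_mat R \<and> R ** R = A"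
proof -
  obtain B ev where fin: "finite B" and orth: "pairwise orthogonal B"
    and unit: "\<And>b. b \<in> B \<Longrightarrow> norm b = 1" and ev: "\<And>b. b \<in> B \<Longrightarrow> A *v b = ev b *\<^sub>R b"
    and ev_nonneg: "\<And>b. b \<in> B \<Longrightarrow> 0 \<le> ev b" and span: "span B = UNIV"
    using pos_semidef_mat_eigenbasis[OF assms] by metis
  define R :: "real^'n^'n" where "R = (\<chi> i j. \<Sum>b\<in>B. sqrt (ev b) * (b $ i * b $ j))"
  have R: "R *v x = (\<Sum>b\<in>B. (sqrt (ev b) * (b \<bullet> x)) *\<^sub>R b)" for x
    unfolding R_def
    by (simp add: vec_eq_iff matrix_vector_mult_def inner_vec_def sum_distrib_left sum_distrib_right
        sum.swap[of _ B] mult_ac)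
  have "symmetric_mat R" unfolding symmetric_mat_def R_def
    by (simp add: transpose_def vec_eq_iff mult.commute)
  moreover have "0 \<le> x \<bullet> (R *v x)" for x
  proof -
    have "x \<bullet> (R *v x) = (\<Sum>b\<in>B. sqrt (ev b) * (b \<bullet> x)\<^sup>2)"
      unfolding R by (simp add: inner_sum_right inner_commute power2_eq_square mult.assoc)
    also have "\<dots> \<ge> 0" by (simp add: sum_nonneg ev_nonneg)
    finally show ?thesis .
  qed
  ultimately have psd: "pos_semidef_mat R" unfolding pos_semidef_mat_def by blast
  have R_eig: "R *v b = sqrt (ev b) *\<^sub>R b" if "b \<in> B" for b
  proof -
    have "R *v b = (\<Sum>b'\<in>B. if b' = b then sqrt (ev b) *\<^sub>R b else 0)"
      unfolding R using orth unit that
      by (intro sum.cong) (auto simp: pairwise_def orthogonal_def dot_square_norm)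
    then show ?thesis using fin that by simp
  qed
  have "(R ** R) *v b = A *v b" if "b \<in> B" for b
    using R_eig[OF that] ev[OF that] ev_nonneg[OF that]
    by (simp add: matrix_vector_mul_assoc[symmetric] matrix_vector_mult_scaleR)
  then have "R ** R = A" by (rule matrix_eq_on_spanning_set[OF span])
  with psd show ?thesis by blast
qed

lemma mat_sqrt:
  fixes A :: "real^'n^'n"
  assumes "pos_semidef_mat A"
  shows "pos_semidef_mat (mat_sqrt A) \<and> mat_sqrt A ** mat_sqrt A = A"
proof -
  have "\<exists>!R. pos_semidef_mat R \<and> R ** R = A"
    using pos_semidef_sqrt_exists[OF assms] pos_semidef_sqrt_unique[OF assms] by blast
  then show ?thesis unfolding mat_sqrt_def by (rule theI')
qed

section \<open>Kronecker products\<close>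

lemma kron_transpose: "transpose (kron A B) = kron (transpose A) (transpose B)"
  by (simp add: kron_def transpose_def vec_eq_iff)

lemma symmetric_mat_kron: "symmetric_mat A \<Longrightarrow> symmetric_mat B \<Longrightarrow> symmetric_mat (kron A B)"
  unfolding symmetric_mat_def by (simp add: kron_transpose)

lemma sum_UNIV_prod:
  fixes f :: "'a::finite \<times> 'b::finite \<Rightarrow> 'c::comm_monoid_add"
  shows "(\<Sum>p\<in>UNIV. f p) = (\<Sum>i\<in>UNIV. \<Sum>j\<in>UNIV. f (i, j))"
  by (simp add: sum.cartesian_product UNIV_Times_UNIV[symmetric] del: UNIV_Times_UNIV)

lemma kron_mult: "kron A B ** kron C D = kron (A ** C) (B ** D)"
  by (simp add: vec_eq_iff kron_def matrix_matrix_mult_def sum_UNIV_prod sum_product mult_ac)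

definition row_slice :: "'a::finite \<Rightarrow> real^('a \<times> 'b::finite) \<Rightarrow> real^'b" where
  "row_slice i x = (\<chi> j. x $ (i, j))"

definition col_slice :: "'b::finite \<Rightarrow> real^('a::finite \<times> 'b) \<Rightarrow> real^'a" where
  "col_slice j x = (\<chi> i. x $ (i, j))"

lemma inner_row_slices: "x \<bullet> y = (\<Sum>i\<in>UNIV. row_slice i x \<bullet> row_slice i y)"
  by (simp add: inner_vec_def row_slice_def sum_UNIV_prod)

lemma inner_col_slices: "x \<bullet> y = (\<Sum>j\<in>UNIV. col_slice j x \<bullet> col_slice j y)"
proof -
  have "x \<bullet> y = (\<Sum>i\<in>UNIV. \<Sum>j\<in>UNIV. x $ (i, j) * y $ (i, j))"
    by (simp add: inner_vec_def sum_UNIV_prod)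
  also have "\<dots> = (\<Sum>j\<in>UNIV. \<Sum>i\<in>UNIV. x $ (i, j) * y $ (i, j))" by (rule sum.swap)
  finally show ?thesis by (simp add: inner_vec_def col_slice_def)
qed

lemma row_slice_kron_mat1: "row_slice i (kron (mat 1) B *v x) = B *v row_slice i x"
proof -
  have "(kron (mat 1) B *v x) $ (i, j)
      = (\<Sum>i'\<in>UNIV. \<Sum>j'\<in>UNIV. (if i = i' then 1 else 0) * B $ j $ j' * x $ (i', j'))" for j
    by (simp add: matrix_vector_mult_def kron_def mat_def sum_UNIV_prod)
  also have "\<dots> j = (\<Sum>i'\<in>UNIV. if i = i' then \<Sum>j'\<in>UNIV. B $ j $ j' * x $ (i', j') else 0)" for j
    by (intro sum.cong) simp_all
  finally show ?thesis
    by (simp add: vec_eq_iff matrix_vector_mult_def row_slice_def)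
qed

lemma col_slice_kron_mat1: "col_slice j (kron A (mat 1) *v x) = A *v col_slice j x"
proof -
  have "(kron A (mat 1) *v x) $ (i, j)
      = (\<Sum>i'\<in>UNIV. \<Sum>j'\<in>UNIV. A $ i $ i' * (if j = j' then 1 else 0) * x $ (i', j'))" for i
    by (simp add: matrix_vector_mult_def kron_def mat_def sum_UNIV_prod)
  also have "\<dots> i = (\<Sum>i'\<in>UNIV. \<Sum>j'\<in>UNIV. if j' = j then A $ i $ i' * x $ (i', j') else 0)" for i
    by (intro sum.cong) auto
  finally show ?thesis
    by (simp add: vec_eq_iff matrix_vector_mult_def col_slice_def)
qed

lemma rayleigh_bounds_kron_mat1_left:
  assumes "rayleigh_bounds B c d"
  shows "rayleigh_bounds (kron (mat 1 :: real^'a^'a) B) c d"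
proof (rule rayleigh_boundsI)
  fix x :: "real^('a \<times> 'b)"
  have quad: "x \<bullet> (kron (mat 1) B *v x) = (\<Sum>i\<in>UNIV. row_slice i x \<bullet> (B *v row_slice i x))"
    by (subst inner_row_slices) (simp add: row_slice_kron_mat1)
  show "c * (x \<bullet> x) \<le> x \<bullet> (kron (mat 1) B *v x)"
    unfolding quad inner_row_slices[of x x] sum_distrib_left
    by (intro sum_mono rayleigh_bounds_lower[OF assms])
  show "x \<bullet> (kron (mat 1) B *v x) \<le> d * (x \<bullet> x)"
    unfolding quad inner_row_slices[of x x] sum_distrib_left
    by (intro sum_mono rayleigh_bounds_upper[OF assms])
qed

lemma rayleigh_bounds_kron_mat1_right:
  assumes "rayleigh_bounds A a b"
  shows "rayleigh_bounds (kron A (mat 1 :: real^'b^'b)) a b"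
proof (rule rayleigh_boundsI)
  fix x :: "real^('a \<times> 'b)"
  have quad: "x \<bullet> (kron A (mat 1) *v x) = (\<Sum>j\<in>UNIV. col_slice j x \<bullet> (A *v col_slice j x))"
    by (subst inner_col_slices) (simp add: col_slice_kron_mat1)
  show "a * (x \<bullet> x) \<le> x \<bullet> (kron A (mat 1) *v x)"
    unfolding quad inner_col_slices[of x x] sum_distrib_left
    by (intro sum_mono rayleigh_bounds_lower[OF assms])
  show "x \<bullet> (kron A (mat 1) *v x) \<le> b * (x \<bullet> x)"
    unfolding quad inner_col_slices[of x x] sum_distrib_left
    by (intro sum_mono rayleigh_bounds_upper[OF assms])
qed

lemma symmetric_mat_congruence:
  "symmetric_mat R \<Longrightarrow> symmetric_mat M \<Longrightarrow> symmetric_mat (R ** M ** R)"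
  unfolding symmetric_mat_def by (simp add: matrix_transpose_mul matrix_mul_assoc)

lemma rayleigh_bounds_congruence:
  fixes R M :: "real^'n^'n"
  assumes R: "symmetric_mat R" and M: "rayleigh_bounds M a b" and RR: "rayleigh_bounds (R ** R) c d"
    and "0 \<le> a"
  shows "rayleigh_bounds (R ** M ** R) (a * c) (b * d)"
proof (rule rayleigh_boundsI)
  fix x :: "real^'n"
  define y where "y = R *v x"
  have quad: "x \<bullet> ((R ** M ** R) *v x) = y \<bullet> (M *v y)"
    unfolding y_def by (simp add: matrix_vector_mul_assoc[symmetric] symmetric_mat_inner[OF R])
  have norm_y: "y \<bullet> y = x \<bullet> ((R ** R) *v x)"
    unfolding y_def by (simp add: matrix_vector_mul_assoc[symmetric] symmetric_mat_inner[OF R])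
  have "0 \<le> b" using rayleigh_bounds_lower_le_upper[OF M] \<open>0 \<le> a\<close> by linarith
  have "a * c * (x \<bullet> x) \<le> a * (y \<bullet> y)"
    unfolding norm_y mult.assoc using rayleigh_bounds_lower[OF RR] \<open>0 \<le> a\<close> by (rule mult_left_mono)
  also have "\<dots> \<le> y \<bullet> (M *v y)" by (rule rayleigh_bounds_lower[OF M])
  finally show "a * c * (x \<bullet> x) \<le> x \<bullet> ((R ** M ** R) *v x)" unfolding quad .
  have "y \<bullet> (M *v y) \<le> b * (y \<bullet> y)" by (rule rayleigh_bounds_upper[OF M])
  also have "\<dots> \<le> b * d * (x \<bullet> x)"
    unfolding norm_y mult.assoc using rayleigh_bounds_upper[OF RR] \<open>0 \<le> b\<close> by (rule mult_left_mono)
  finally show "x \<bullet> ((R ** M ** R) *v x) \<le> b * d * (x \<bullet> x)" unfolding quad .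
qed

lemma rayleigh_bounds_kron:
  fixes A :: "real^'a^'a" and B :: "real^'b^'b"
  assumes A: "rayleigh_bounds A a b" "0 \<le> a" and B: "pos_semidef_mat B" "rayleigh_bounds B c d"
  shows "rayleigh_bounds (kron A B) (a * c) (b * d)"
proof -
  define T where "T = kron (mat 1 :: real^'a^'a) (mat_sqrt B)"
  have sqrt: "pos_semidef_mat (mat_sqrt B)" "mat_sqrt B ** mat_sqrt B = B"
    using mat_sqrt[OF B(1)] by auto
  have "symmetric_mat (mat 1 :: real^'a^'a)" by (simp add: symmetric_mat_def)
  then have "symmetric_mat T" unfolding T_def
    using pos_semidef_mat_symmetric[OF sqrt(1)] by (rule symmetric_mat_kron)
  moreover have "rayleigh_bounds (kron A (mat 1)) a b" by (rule rayleigh_bounds_kron_mat1_right[OF A(1)])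
  moreover have "rayleigh_bounds (T ** T) c d"
    unfolding T_def kron_mult sqrt(2) using rayleigh_bounds_kron_mat1_left[OF B(2)] by simp
  ultimately have "rayleigh_bounds (T ** kron A (mat 1) ** T) (a * c) (b * d)"
    using A(2) by (rule rayleigh_bounds_congruence)
  then show ?thesis using sqrt(2) unfolding T_def kron_mult by simp
qed

section \<open>Gram matrices and singular values\<close>

lemma symmetric_mat_gram: "symmetric_mat (A ** transpose A)"
  unfolding symmetric_mat_def by (simp add: matrix_transpose_mul)

lemma pos_semidef_mat_gram: "pos_semidef_mat ((A :: real^'q^'p) ** transpose A)"
  unfolding pos_semidef_mat_def
proof (intro conjI allI symmetric_mat_gram)
  fix x :: "real^'p"
  have "x \<bullet> ((A ** transpose A) *v x) = x \<bullet> (A *v (transpose A *v x))"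
    by (simp add: matrix_vector_mul_assoc del: transpose_matrix_vector)
  also have "\<dots> = (x v* A) \<bullet> (x v* A)" by (simp add: dot_lmul_matrix)
  finally show "0 \<le> x \<bullet> ((A ** transpose A) *v x)" by simp
qed

lemma lambda_max_gram_le:
  fixes A :: "real^'q^'p"
  shows "lambda_max (A ** transpose A) \<le> lambda_max (transpose A ** A)"
proof -
  let ?P = "A ** transpose A" and ?Q = "transpose A ** A"
  have Q_psd: "pos_semidef_mat ?Q" using pos_semidef_mat_gram[of "transpose A"] by simp
  have Q_bounds: "rayleigh_bounds ?Q (lambda_min ?Q) (lambda_max ?Q)"
    by (rule rayleigh_bounds_lambda[OF pos_semidef_mat_symmetric[OF Q_psd]])
  obtain v where v: "v \<noteq> 0" "?P *v v = lambda_max ?P *\<^sub>R v"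
    using lambda_max_in_eigvals[OF symmetric_mat_gram] unfolding eigvals_def by blast
  show ?thesis
  proof (cases "lambda_max ?P \<le> 0")
    case True
    then show ?thesis using pos_semidef_mat_lambda_nonneg(2)[OF Q_psd] by linarith
  next
    case False
    define u where "u = transpose A *v v"
    have Au: "A *v u = lambda_max ?P *\<^sub>R v"
      using v(2) by (simp add: u_def matrix_vector_mul_assoc del: transpose_matrix_vector)
    then have "?Q *v u = lambda_max ?P *\<^sub>R u"
      by (simp add: u_def matrix_vector_mul_assoc[symmetric] matrix_vector_mult_scaleR
          del: transpose_matrix_vector)
    moreover have "u \<noteq> 0" using Au v(1) False by auto
    ultimately have "lambda_max ?P \<in> eigvals ?Q" unfolding eigvals_def by blast
    then show ?thesis using eigval_in_rayleigh_bounds[OF Q_bounds] by blast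
  qed
qed

lemma rayleigh_bounds_gram_sigma:
  fixes A :: "real^'q^'p"
  assumes "CARD('p) \<le> CARD('q)"
  shows "rayleigh_bounds (A ** transpose A) ((sigma_min A)\<^sup>2) ((sigma_max A)\<^sup>2)"
proof -
  have P_psd: "pos_semidef_mat (A ** transpose A)" by (rule pos_semidef_mat_gram)
  have Q_psd: "pos_semidef_mat (transpose A ** A)" using pos_semidef_mat_gram[of "transpose A"] by simp
  have "(sigma_min A)\<^sup>2 \<le> lambda_min (A ** transpose A)"
    using assms pos_semidef_mat_lambda_nonneg(1)[OF P_psd] by (simp add: sigma_min_def)
  moreover have "lambda_max (A ** transpose A) \<le> (sigma_max A)\<^sup>2"
    using lambda_max_gram_le[of A] pos_semidef_mat_lambda_nonneg(2)[OF Q_psd] by (simp add: sigma_max_def)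
  ultimately show ?thesis by (rule rayleigh_bounds_mono[OF rayleigh_bounds_lambda[OF symmetric_mat_gram]])
qed

lemma rayleigh_bounds_gram_transpose_sigma:
  fixes A :: "real^'q^'p"
  assumes "CARD('q) < CARD('p)"
  shows "rayleigh_bounds (transpose A ** A) ((sigma_min A)\<^sup>2) ((sigma_max A)\<^sup>2)"
proof -
  have Q_psd: "pos_semidef_mat (transpose A ** A)" using pos_semidef_mat_gram[of "transpose A"] by simp
  then show ?thesis
    using assms pos_semidef_mat_lambda_nonneg[OF Q_psd]
      rayleigh_bounds_lambda[OF pos_semidef_mat_symmetric[OF Q_psd]]
    by (simp add: sigma_min_def sigma_max_def)
qed

definition gauss_newton_mat ::
    "real^'m^'k \<Rightarrow> real^'d^'m \<Rightarrow> real^'d^'d \<Rightarrow> real^('k \<times> 'd)^('k \<times> 'd)" where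
  "gauss_newton_mat W V S = kron (W ** transpose W) S
    + kron (mat 1) (mat_sqrt S ** transpose V ** V ** mat_sqrt S)"

lemma symmetric_mat_gauss_newton:
  assumes "pos_semidef_mat S"
  shows "symmetric_mat (gauss_newton_mat W V S)"
proof -
  have "symmetric_mat (mat_sqrt S)" using mat_sqrt[OF assms] pos_semidef_mat_symmetric by blast
  then have "symmetric_mat (mat_sqrt S ** (transpose V ** V) ** mat_sqrt S)"
    using symmetric_mat_congruence symmetric_mat_gram[of "transpose V"] by simp
  then show ?thesis unfolding gauss_newton_mat_def
    by (intro symmetric_mat_add symmetric_mat_kron symmetric_mat_gram pos_semidef_mat_symmetric[OF assms])
      (simp_all add: symmetric_mat_def matrix_mul_assoc)
qed

lemma rayleigh_bounds_gauss_newton: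
  fixes W :: "real^'m^'k" and V :: "real^'d^'m" and S :: "real^'d^'d"
  assumes "max CARD('d) CARD('k) < CARD('m)" and S: "pos_semidef_mat S"
  shows "rayleigh_bounds (gauss_newton_mat W V S)
    (lambda_min S * ((sigma_min W)\<^sup>2 + (sigma_min V)\<^sup>2))
    (lambda_max S * ((sigma_max W)\<^sup>2 + (sigma_max V)\<^sup>2))"
proof -
  let ?R = "mat_sqrt S"
  have R: "symmetric_mat ?R" "?R ** ?R = S"
    using mat_sqrt[OF S] pos_semidef_mat_symmetric by auto
  have S_bounds: "rayleigh_bounds S (lambda_min S) (lambda_max S)"
    by (rule rayleigh_bounds_lambda[OF pos_semidef_mat_symmetric[OF S]])
  have W: "rayleigh_bounds (W ** transpose W) ((sigma_min W)\<^sup>2) ((sigma_max W)\<^sup>2)"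
    using assms(1) by (intro rayleigh_bounds_gram_sigma) simp
  have V: "rayleigh_bounds (transpose V ** V) ((sigma_min V)\<^sup>2) ((sigma_max V)\<^sup>2)"
    using assms(1) by (intro rayleigh_bounds_gram_transpose_sigma) simp
  have "rayleigh_bounds (?R ** (transpose V ** V) ** ?R)
      ((sigma_min V)\<^sup>2 * lambda_min S) ((sigma_max V)\<^sup>2 * lambda_max S)"
    using rayleigh_bounds_congruence[OF R(1) V] R(2) S_bounds by simp
  then have "rayleigh_bounds (?R ** transpose V ** V ** ?R)
      ((sigma_min V)\<^sup>2 * lambda_min S) ((sigma_max V)\<^sup>2 * lambda_max S)"
    by (simp add: matrix_mul_assoc)
  from rayleigh_bounds_add[OF rayleigh_bounds_kron[OF W _ S S_bounds]
      rayleigh_bounds_kron_mat1_left[OF this]]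
  show ?thesis unfolding gauss_newton_mat_def by (simp add: algebra_simps)
qed

lemma weighted_ratio_of_sums_of_squares:
  fixes s S t T :: real
  assumes "0 < s" "0 < t"
  defines "\<beta> \<equiv> s\<^sup>2 / (s\<^sup>2 + t\<^sup>2)"
  shows "(S\<^sup>2 + T\<^sup>2) / (s\<^sup>2 + t\<^sup>2) = \<beta> * (S / s)\<^sup>2 + (1 - \<beta>) * (T / t)\<^sup>2"
proof -
  have pos: "s\<^sup>2 + t\<^sup>2 \<noteq> 0" using assms by (simp add: add_pos_pos)
  have one_minus: "1 - \<beta> = t\<^sup>2 / (s\<^sup>2 + t\<^sup>2)" using pos unfolding \<beta>_def by (simp add: field_simps)
  have "\<beta> * (S / s)\<^sup>2 = S\<^sup>2 / (s\<^sup>2 + t\<^sup>2)" using assms(1) by (simp add: \<beta>_def power_divide)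
  moreover have "(1 - \<beta>) * (T / t)\<^sup>2 = T\<^sup>2 / (s\<^sup>2 + t\<^sup>2)"
    using assms(2) unfolding one_minus by (simp add: power_divide)
  ultimately show ?thesis by (simp add: add_divide_distrib)
qed

theorem mainTheorem1:
  fixes W :: "real^'m^'k" and V :: "real^'d^'m" and Sigma :: "real^'d^'d"
  assumes "CARD('m) > max CARD('d) CARD('k)"
    and "sigma_min W > 0" and "sigma_min V > 0"
    and "pos_def_mat Sigma"
  defines "G \<equiv> kron (W ** transpose W) Sigma
               + kron (mat 1 :: real^'k^'k) (mat_sqrt Sigma ** transpose V ** V ** mat_sqrt Sigma)"
    and "\<beta> \<equiv> (sigma_min W)\<^sup>2 / ((sigma_min W)\<^sup>2 + (sigma_min V)\<^sup>2)"
  shows "pos_def_mat G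
    \<and> kappa_sym G \<le> kappa_sym Sigma * (((sigma_max W)\<^sup>2 + (sigma_max V)\<^sup>2)
                                          / ((sigma_min W)\<^sup>2 + (sigma_min V)\<^sup>2))
    \<and> kappa_sym Sigma * (((sigma_max W)\<^sup>2 + (sigma_max V)\<^sup>2)
                          / ((sigma_min W)\<^sup>2 + (sigma_min V)\<^sup>2))
      = kappa_sym Sigma * (\<beta> * (kappa_rect W)\<^sup>2 + (1 - \<beta>) * (kappa_rect V)\<^sup>2)"
proof -
  let ?lo = "(sigma_min W)\<^sup>2 + (sigma_min V)\<^sup>2" and ?hi = "(sigma_max W)\<^sup>2 + (sigma_max V)\<^sup>2"
  have Sigma: "pos_semidef_mat Sigma" by (rule pos_def_mat_pos_semidef[OF assms(4)])
  have G_gn: "G = gauss_newton_mat W V Sigma" by (simp add: G_def gauss_newton_mat_def)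
  have G_sym: "symmetric_mat G" unfolding G_gn by (rule symmetric_mat_gauss_newton[OF Sigma])
  have G: "rayleigh_bounds G (lambda_min Sigma * ?lo) (lambda_max Sigma * ?hi)"
    unfolding G_gn using assms(1) Sigma by (rule rayleigh_bounds_gauss_newton)
  have lo: "0 < lambda_min Sigma * ?lo"
    using lambda_min_pos[OF assms(4)] assms(2,3) by (intro mult_pos_pos add_pos_pos) simp_all
  have "kappa_sym G \<le> lambda_max Sigma * ?hi / (lambda_min Sigma * ?lo)"
    by (rule kappa_sym_le_of_rayleigh[OF G_sym G lo])
  also have "\<dots> = kappa_sym Sigma * (?hi / ?lo)" by (simp add: kappa_sym_def)
  finally show ?thesis
    using pos_def_mat_of_rayleigh[OF G_sym G lo]
      weighted_ratio_of_sums_of_squares[OF assms(2,3), of "sigma_max W" "sigma_max V"]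
    unfolding \<beta>_def kappa_rect_def by simp
qed

end
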